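(* Let $\alpha$ be a parameter. (i) Let $n_1>\dots>n_p\ge0$ and $m_1>\dots>m_q\ge0$ be integers, $r=p+q$, and $P(x)=e^{-qx}\mathrm{Wr}[L^{\alpha}_{n_1}(x),\dots,L^{\alpha}_{n_p}(x),e^xL^{\alpha}_{m_1}(-x),\dots,e^xL^{\alpha}_{m_q}(-x)]$. Let $s$ be the smallest positive integer with $n_i<r-1$ for all $i\ge s$ and $n_i\ge r-1$ for all $i<s$ ($s=p+1$ if none exists), and $s'$ the analogue for the $m_j$ ($s'=q+1$ if none exists). Then, up to sign, $$P(0)=\frac{\prod_{k=1}^{r}(\alpha+k)^{(r-k)}\prod_{i=1}^{s-1}(\alpha+r)^{(n_i-r+1)}\prod_{j=1}^{s'-1}(\alpha+r)^{(m_j-r+1)}\;\Delta(-n_p,\dots,-n_1,\alpha+1+m_1,\dots,\alpha+1+m_q)}{\prod_{i=s}^{p}(\alpha+1+n_i)^{(r-1-n_i)}\prod_{j=s'}^{q}(\alpha+1+m_j)^{(r-1-m_j)}\prod_{i=1}^{p}n_i!\prod_{j=1}^{q}m_j!}.$$ (ii) Let $n_1'>\dots>n_p'\ge0$ and $m_1'>\dots>m_q'\ge0$ be integers, $r=p+q$, and $Q(x)=e^{-px}x^{\alpha r}\mathrm{Wr}[x^{-\alpha}L^{-\alpha}_{m_1'}(x),\dots,x^{-\alpha}L^{-\alpha}_{m_q'}(x),e^xx^{-\alpha}L^{-\alpha}_{n_1'}(-x),\dots,e^xx^{-\alpha}L^{-\alpha}_{n_p'}(-x)]$. Let $\mathbf{s}$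 be the smallest positive integer with $n_i'<r-1$ for $i\ge\mathbf{s}$ and $n_i'\ge r-1$ for $i<\mathbf{s}$ ($\mathbf{s}=p+1$ if none exists), and $\mathbf{s}'$ the analogue for the $m_j'$ ($\mathbf{s}'=q+1$ if none exists). Then, up to sign, $$Q(0)=\frac{\prod_{k=1}^{r}(-\alpha+k)^{(r-k)}\prod_{j=1}^{\mathbf{s}'-1}(-\alpha+r)^{(m_j'-r+1)}\prod_{i=1}^{\mathbf{s}-1}(-\alpha+r)^{(n_i'-r+1)}\;\Delta(-m_q',\dots,-m_1',-\alpha+1+n_1',\dots,-\alpha+1+n_p')}{\prod_{j=\mathbf{s}'}^{q}(-\alpha+1+m_j')^{(r-1-m_j')}\prod_{i=\mathbf{s}}^{p}(-\alpha+1+n_i')^{(r-1-n_i')}\prod_{j=1}^{q}m_j'!\prod_{i=1}^{p}n_i'!}.$$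
   Context: $L_n^{\beta}$ is the classical Laguerre polynomial; $\mathrm{Wr}$ is the Wronskian; rising factorial $a^{(n)}=a(a+1)\cdots(a+n-1)$, $a^{(0)}=1$; Vandermonde $\Delta(a_1,\dots,a_k)=\prod_{i<j}(a_j-a_i)$. In the paper's notation $P=\Omega^{\alpha}_{\mu,\nu}$ is the generalized Laguerre polynomial for the canonical Maya diagrams $(\emptyset|n_1,\dots,n_p)$, $(\emptyset|m_1,\dots,m_q)$, and $Q=\Omega^{\alpha}_{\mu',\nu'}$ the one for the conjugate canonical diagrams $(n_1',\dots,n_p'|\emptyset)$, $(m_1',\dots,m_q'|\emptyset)$; $Q(0)$ means the value at $0$ of this polynomial. The paper ignores overall factors $(-1)^d$. *)

theory Defs
  imports "HOL-Analysis.Analysis" "Jordan_Normal_Form.Determinant"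
begin

definition laguerre :: "nat \<Rightarrow> real \<Rightarrow> real \<Rightarrow> real" where
  "laguerre n \<beta> x = (\<Sum>k\<le>n. ((of_nat n + \<beta>) gchoose (n - k)) * (- x) ^ k / fact k)"

definition wronskian :: "(real \<Rightarrow> real) list \<Rightarrow> real \<Rightarrow> real" where
  "wronskian fs x = Determinant.det (mat (length fs) (length fs) (\<lambda>(i, j). (deriv ^^ i) (fs ! j) x))"

definition vandermonde :: "real list \<Rightarrow> real" where
  "vandermonde as = (\<Prod>j<length as. \<Prod>i<j. as ! j - as ! i)"

definition split_index :: "nat list \<Rightarrow> int \<Rightarrow> nat" where
  "split_index ns t = (LEAST s. 1 \<le> s \<and>
      (\<forall>i\<in>{1..length ns}. (s \<le> i \<longrightarrow> int (ns ! (i - 1)) < t) \<and>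
                            (i < s \<longrightarrow> int (ns ! (i - 1)) \<ge> t)))"

definition laguerre_P :: "real \<Rightarrow> nat list \<Rightarrow> nat list \<Rightarrow> real \<Rightarrow> real" where
  "laguerre_P \<alpha> ns ms x = exp (- real (length ms) * x) *
     wronskian (map (\<lambda>n y. laguerre n \<alpha> y) ns @ map (\<lambda>m y. exp y * laguerre m \<alpha> (- y)) ms) x"

text \<open>Q(x) = e^{-px} x^{alpha r} Wr[x^{-alpha} L^{-alpha}_{m'_j}(x) .., e^x x^{-alpha} L^{-alpha}_{n'_i}(-x) ..],
  meaningful for x > 0; here ns = n', ms = m', p = length ns.\<close>
definition laguerre_Q :: "real \<Rightarrow> nat list \<Rightarrow> nat list \<Rightarrow> real \<Rightarrow> real" where
  "laguerre_Q \<alpha> ns ms x = exp (- real (length ns) * x) * x powr (\<alpha> * real (length ns + length ms)) *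
     wronskian (map (\<lambda>m y. y powr (- \<alpha>) * laguerre m (- \<alpha>) y) ms @
                map (\<lambda>n y. exp y * y powr (- \<alpha>) * laguerre n (- \<alpha>) (- y)) ns) x"

end

theory Submission
  imports Defs
begin

(* At x = 0 the i-th derivative of L_n^a(x) is (-1)^i (a+1+i)^(n-i)/(n-i)!, and that of
   e^x L_m^a(-x) is (a+1+i)^(m)/m!.  Both factor as (a+1+i)^(r-1-i) * c_j * x_j^(i) with
   x_j = -n_j resp. a+1+m_j and c_j = Gamma(a+1+n_j)/(Gamma(a+r) n_j!); the sign (-1)^i is
   absorbed by (-n)^(i) = (-1)^i n!/(n-i)!.  Hence P(0) is the product of the row factors, the
   column factors and det [x_j^(i)], which row reduction identifies with the Vandermonde
   determinant of the x_j; listing the n_j in reverse order only changes its sign.  Each c_j is a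
   Pochhammer symbol or the reciprocal of one according to whether n_j >= r-1, which is where
   the index s enters.
   For Q, the Leibniz rule shows that multiplying r functions by x^(-a) multiplies their
   Wronskian by x^(-a r), so for x > 0, Q(x) is P(x) with a replaced by -a and the two lists
   exchanged, and Q(0) is the limit at 0+. *)

section \<open>Pochhammer determinants\<close>

lemma det_mat_scale_rows_cols:
  fixes N :: "nat \<Rightarrow> nat \<Rightarrow> 'a::comm_ring_1"
  shows "det (mat n n (\<lambda>(i,j). a i * b j * N i j)) =
         (\<Prod>i<n. a i) * (\<Prod>j<n. b j) * det (mat n n (\<lambda>(i,j). N i j))"
proof -
  have "signof p * (\<Prod>i = 0..<n. mat n n (\<lambda>(i,j). a i * b j * N i j) $$ (i, p i)) =
     (\<Prod>i<n. a i) * (\<Prod>j<n. b j) * (signof p * (\<Prod>i = 0..<n. mat n n (\<lambda>(i,j). N i j) $$ (i, p i)))"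
    if p: "p permutes {0..<n}" for p
  proof -
    have p_lt: "i < n \<Longrightarrow> p i < n" for i using permutes_in_image[OF p] by auto
    have "(\<Prod>i = 0..<n. mat n n (\<lambda>(i,j). a i * b j * N i j) $$ (i, p i)) =
          (\<Prod>i = 0..<n. a i) * (\<Prod>i = 0..<n. b (p i)) * (\<Prod>i = 0..<n. N i (p i))"
      by (simp add: p_lt prod.distrib)
    also have "(\<Prod>i = 0..<n. b (p i)) = (\<Prod>i = 0..<n. b i)"
      using prod.permute[OF p, of b] by (simp add: comp_def)
    also have "(\<Prod>i = 0..<n. N i (p i)) = (\<Prod>i = 0..<n. mat n n (\<lambda>(i,j). N i j) $$ (i, p i))"
      by (simp add: p_lt)
    finally show ?thesis
      by (simp add: atLeast0LessThan algebra_simps)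
  qed
  then show ?thesis
    unfolding det_def'[OF mat_carrier] sum_distrib_left by (intro sum.cong) auto
qed

lemma det_pochhammer_mat_Suc:
  fixes x :: "nat \<Rightarrow> 'a::comm_ring_1"
  shows "det (mat (Suc n) (Suc n) (\<lambda>(i,j). pochhammer (x j) i)) =
    (\<Prod>j<n. x (Suc j) - x 0) * det (mat n n (\<lambda>(i,j). pochhammer (x (Suc j)) i))"
proof -
  define M where "M = mat (Suc n) (Suc n) (\<lambda>(i,j). pochhammer (x j) i)"
  \<comment> \<open>Subtracting (x 0 + i - 1) times row i - 1 from row i turns x_j^(i) into (x_j - x_0) x_j^(i-1).\<close>
  define L :: "'a mat" where "L = mat (Suc n) (Suc n)
    (\<lambda>(i,k). if k = i then 1 else if Suc k = i then - (x 0 + of_nat k) else 0)"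
  define N where "N = mat (Suc n) (Suc n)
    (\<lambda>(i,j). if i = 0 then 1 else (x j - x 0) * pochhammer (x j) (i - 1))"
  have "L * M = N"
  proof (rule eq_matI)
    fix i j assume "i < dim_row N" "j < dim_col N"
    then have i: "i < Suc n" and j: "j < Suc n" by (auto simp: N_def)
    show "(L * M) $$ (i, j) = N $$ (i, j)"
    proof (cases i)
      case 0
      have "(L * M) $$ (i, j) = (\<Sum>k<Suc n. L $$ (i,k) * M $$ (k,j))"
        using i j by (simp add: L_def M_def scalar_prod_def atLeast0LessThan)
      also have "\<dots> = (\<Sum>k\<in>{0}. L $$ (i,k) * M $$ (k,j))"
        by (intro sum.mono_neutral_right) (auto simp: L_def 0)
      finally show ?thesis using j by (simp add: L_def M_def N_def 0)
    next
      case (Suc i0)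
      have "(L * M) $$ (i, j) = (\<Sum>k<Suc n. L $$ (i,k) * M $$ (k,j))"
        using i j by (simp add: L_def M_def scalar_prod_def atLeast0LessThan)
      also have "\<dots> = (\<Sum>k\<in>{i0, i}. L $$ (i,k) * M $$ (k,j))"
        using i by (intro sum.mono_neutral_right) (auto simp: L_def Suc)
      finally show ?thesis
        using i j by (simp add: L_def M_def N_def Suc pochhammer_rec' algebra_simps)
    qed
  qed (auto simp: L_def N_def M_def)
  have "det L = 1"
  proof -
    have "det L = prod_list (diag_mat L)"
      by (rule det_lower_triangular[where n="Suc n"]) (auto simp: L_def)
    also have "diag_mat L = map (\<lambda>i. 1) [0..<Suc n]"
      unfolding diag_mat_def by (intro map_cong) (auto simp: L_def simp del: upt_Suc)
    finally show ?thesis by (simp add: map_replicate_const del: upt_Suc)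
  qed
  then have "det M = det N"
    using det_mult[of L "Suc n" M] \<open>L * M = N\<close> by (simp add: L_def M_def)
  also have "det N = (\<Sum>i<Suc n. N $$ (i,0) * cofactor N i 0)"
    by (rule laplace_expansion_column) (auto simp: N_def)
  also have "\<dots> = cofactor N 0 0"
    by (subst sum.mono_neutral_right[of "{..<Suc n}" "{0}"]) (auto simp: N_def)
  also have "\<dots> = det (mat n n (\<lambda>(i,j). 1 * (x (Suc j) - x 0) * pochhammer (x (Suc j)) i))"
    unfolding cofactor_def mat_delete_def
    by (simp add: N_def, intro arg_cong[where f=det] eq_matI) auto
  finally show ?thesis
    unfolding M_def det_mat_scale_rows_cols by simp
qed

lemma det_pochhammer_mat:
  fixes x :: "nat \<Rightarrow> 'a::comm_ring_1"
  shows "det (mat n n (\<lambda>(i,j). pochhammer (x j) i)) = (\<Prod>j<n. \<Prod>i<j. x j - x i)"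
proof (induction n arbitrary: x)
  case 0
  then show ?case by (simp add: det_def')
next
  case (Suc n)
  then show ?case
    by (simp add: det_pochhammer_mat_Suc prod.lessThan_Suc_shift prod.distrib del: prod.lessThan_Suc)
qed

lemma vandermonde_eq_det_pochhammer:
  "vandermonde xs = det (mat (length xs) (length xs) (\<lambda>(i,j). pochhammer (xs ! j) i))"
  unfolding vandermonde_def by (simp add: det_pochhammer_mat)

lemma vandermonde_permute:
  assumes perm: "\<pi> permutes {0..<length xs}" and len: "length ys = length xs"
    and nth: "\<And>j. j < length xs \<Longrightarrow> ys ! j = xs ! \<pi> j"
  shows "vandermonde ys = signof \<pi> * vandermonde xs"
proof -
  define n where "n = length xs"
  define T where "T = mat n n (\<lambda>(j,i). pochhammer (xs ! j) i)"
  have \<pi>_lt: "j < length xs \<Longrightarrow> \<pi> j < length xs" for j using permutes_in_image[OF perm, of j] by auto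
  have "vandermonde ys = det (mat n n (\<lambda>(i,j). pochhammer (ys ! j) i))"
    using vandermonde_eq_det_pochhammer[of ys] len by (simp add: n_def)
  also have "\<dots> = det (transpose_mat (mat n n (\<lambda>(i,j). pochhammer (ys ! j) i)))"
    by (rule det_transpose[symmetric, where n=n]) simp
  also have "transpose_mat (mat n n (\<lambda>(i,j). pochhammer (ys ! j) i)) = mat n n (\<lambda>(j,i). T $$ (\<pi> j, i))"
    by (rule eq_matI) (auto simp: T_def nth n_def \<pi>_lt)
  also have "det \<dots> = signof \<pi> * det T"
    by (rule det_permute_rows[OF _ perm[folded n_def]]) (simp add: T_def)
  also have "T = transpose_mat (mat n n (\<lambda>(i,j). pochhammer (xs ! j) i))"
    by (rule eq_matI) (auto simp: T_def)
  also have "det \<dots> = det (mat n n (\<lambda>(i,j). pochhammer (xs ! j) i))"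
    by (rule det_transpose[where n=n]) simp
  also have "\<dots> = vandermonde xs"
    by (simp add: vandermonde_eq_det_pochhammer n_def)
  finally show ?thesis .
qed

lemma vandermonde_rev_append:
  "vandermonde (rev xs @ ys) = vandermonde (xs @ ys) \<or> vandermonde (rev xs @ ys) = - vandermonde (xs @ ys)"
proof -
  define \<pi> where "\<pi> j = (if j < length xs then length xs - 1 - j else j)" for j
  have "\<pi> permutes {0..<length (xs @ ys)}"
  proof (rule bij_imp_permutes)
    show "bij_betw \<pi> {0..<length (xs @ ys)} {0..<length (xs @ ys)}"
      by (rule bij_betw_byWitness[where f'=\<pi>]) (auto simp: \<pi>_def)
  qed (auto simp: \<pi>_def)
  then have "vandermonde (rev xs @ ys) = signof \<pi> * vandermonde (xs @ ys)"
    by (rule vandermonde_permute) (auto simp: \<pi>_def nth_append rev_nth)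
  then show ?thesis by (auto simp: sign_def)
qed

section \<open>Laguerre polynomials\<close>

lemma laguerre_0 [simp]: "laguerre 0 \<beta> y = 1"
  by (simp add: laguerre_def)

lemma laguerre_at_0: "laguerre n \<beta> 0 = pochhammer (\<beta> + 1) n / fact n"
proof -
  have "laguerre n \<beta> 0 = (\<Sum>k\<le>n. if k = 0 then (of_nat n + \<beta>) gchoose n else 0)"
    unfolding laguerre_def by (intro sum.cong refl) auto
  also have "\<dots> = pochhammer (\<beta> + 1) n / fact n"
    by (simp add: gbinomial_pochhammer')
  finally show ?thesis .
qed

lemma has_real_derivative_laguerre:
  "((\<lambda>y. laguerre (Suc n) \<beta> y) has_real_derivative - laguerre n (\<beta> + 1) y) (at y)"
proof -
  define a where "a k = (of_nat (Suc n) + \<beta>) gchoose (Suc n - k)" for k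
  have "((\<lambda>y. \<Sum>k\<le>Suc n. a k * (- y) ^ k / fact k) has_real_derivative
        (\<Sum>k\<le>Suc n. a k * (real k * (- y) ^ (k - 1) * (-1)) / fact k)) (at y)"
    by (rule DERIV_sum, rule DERIV_cdivide, rule DERIV_cmult)
      (use DERIV_power[OF DERIV_minus[OF DERIV_ident]] in simp)
  moreover have "(\<Sum>k\<le>Suc n. a k * (real k * (- y) ^ (k - 1) * (-1)) / fact k) =
        (\<Sum>k\<le>n. a (Suc k) * (real (Suc k) * (- y) ^ k * (-1)) / fact (Suc k))"
    by (subst sum.atMost_Suc_shift) simp
  moreover have "\<dots> = - laguerre n (\<beta> + 1) y"
    unfolding laguerre_def sum_negf[symmetric]
  proof (intro sum.cong refl)
    fix k assume "k \<in> {..n}"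
    then have "a (Suc k) = (of_nat n + (\<beta> + 1)) gchoose (n - k)"
      by (simp add: a_def algebra_simps)
    then show "a (Suc k) * (real (Suc k) * (- y) ^ k * (-1)) / fact (Suc k) =
      - (((of_nat n + (\<beta> + 1)) gchoose (n - k)) * (- y) ^ k / fact k)"
      by (simp add: field_simps del: of_nat_Suc)
  qed
  ultimately show ?thesis
    by (simp add: laguerre_def a_def)
qed

lemma laguerre_Suc_param:
  "laguerre (Suc m) (\<beta> + 1) x = laguerre (Suc m) \<beta> x + laguerre m (\<beta> + 1) x"
proof -
  have "((of_nat (Suc m) + (\<beta> + 1)) gchoose (Suc m - k)) * (- x) ^ k / fact k =
      ((of_nat (Suc m) + \<beta>) gchoose (Suc m - k)) * (- x) ^ k / fact k +
      (if k \<le> m then ((of_nat m + (\<beta> + 1)) gchoose (m - k)) else 0) * (- x) ^ k / fact k"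
    if "k \<le> Suc m" for k
  proof (cases "k \<le> m")
    case True
    then have "Suc m - k = Suc (m - k)" by simp
    moreover have "of_nat (Suc m) + (\<beta> + 1) = (of_nat (Suc m) + \<beta>) + 1"
      "of_nat m + (\<beta> + 1) = of_nat (Suc m) + \<beta>" by simp_all
    ultimately show ?thesis
      using True by (simp only: gbinomial_Suc_Suc if_True) (simp add: add_divide_distrib distrib_right)
  next
    case False
    then show ?thesis using that by (simp add: le_Suc_eq)
  qed
  then have "laguerre (Suc m) (\<beta> + 1) x = laguerre (Suc m) \<beta> x +
      (\<Sum>k\<le>Suc m. (if k \<le> m then ((of_nat m + (\<beta> + 1)) gchoose (m - k)) else 0) * (- x) ^ k / fact k)"
    unfolding laguerre_def sum.distrib[symmetric] by (intro sum.cong) auto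
  also have "(\<Sum>k\<le>Suc m. (if k \<le> m then ((of_nat m + (\<beta> + 1)) gchoose (m - k)) else 0) * (- x) ^ k / fact k)
     = laguerre m (\<beta> + 1) x"
    by (simp add: laguerre_def)
  finally show ?thesis .
qed

lemma has_real_derivative_exp_laguerre_minus:
  "((\<lambda>y. exp y * laguerre m \<beta> (- y)) has_real_derivative exp y * laguerre m (\<beta> + 1) (- y)) (at y)"
proof (cases m)
  case 0
  then show ?thesis by (simp add: DERIV_exp)
next
  case (Suc m0)
  have "((\<lambda>y. laguerre (Suc m0) \<beta> (- y)) has_real_derivative (- laguerre m0 (\<beta> + 1) (- y)) * (- 1)) (at y)"
    by (rule DERIV_chain2[where g=uminus, OF has_real_derivative_laguerre]) (rule derivative_eq_intros refl)+
  then have "((\<lambda>y. exp y * laguerre m \<beta> (- y)) has_real_derivative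
       exp y * laguerre m \<beta> (- y) + exp y * laguerre m0 (\<beta> + 1) (- y)) (at y)"
    unfolding Suc by (auto intro!: derivative_eq_intros)
  then show ?thesis using laguerre_Suc_param[of m0 \<beta> "- y"] Suc by (simp add: algebra_simps)
qed

lemma higher_deriv_laguerre:
  "(deriv ^^ i) (\<lambda>y. laguerre n \<beta> y) =
     (\<lambda>y. if i \<le> n then (-1) ^ i * laguerre (n - i) (\<beta> + of_nat i) y else 0)"
proof (induction i)
  case 0
  then show ?case by simp
next
  case (Suc i)
  have deriv_step: "deriv (\<lambda>y. if i \<le> n then (-1) ^ i * laguerre (n - i) (\<beta> + of_nat i) y else 0) y =
      (if Suc i \<le> n then (-1) ^ Suc i * laguerre (n - Suc i) (\<beta> + of_nat (Suc i)) y else 0)" for y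
  proof (cases "Suc i \<le> n")
    case True
    then have "n - i = Suc (n - Suc i)" by simp
    moreover have "((\<lambda>y. (-1) ^ i * laguerre (Suc (n - Suc i)) (\<beta> + of_nat i) y) has_real_derivative
           (-1) ^ i * (- laguerre (n - Suc i) (\<beta> + of_nat i + 1) y)) (at y)"
      by (rule DERIV_cmult[OF has_real_derivative_laguerre])
    ultimately show ?thesis
      using True by (intro DERIV_imp_deriv) (simp add: algebra_simps)
  next
    case False
    then show ?thesis by (cases "i = n") simp_all
  qed
  have "(deriv ^^ Suc i) (\<lambda>y. laguerre n \<beta> y) = deriv ((deriv ^^ i) (\<lambda>y. laguerre n \<beta> y))"
    by simp
  then show ?case
    unfolding Suc.IH by (simp only: ext[OF deriv_step])
qed

lemma higher_deriv_exp_laguerre_minus: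
  "(deriv ^^ i) (\<lambda>y. exp y * laguerre m \<beta> (- y)) = (\<lambda>y. exp y * laguerre m (\<beta> + of_nat i) (- y))"
proof (induction i)
  case 0
  then show ?case by simp
next
  case (Suc i)
  show ?case
    using Suc has_real_derivative_exp_laguerre_minus[of m "\<beta> + of_nat i"]
    by (auto intro!: ext DERIV_imp_deriv simp: algebra_simps)
qed

lemma pochhammer_minus_of_nat:
  "pochhammer (- real n) i = (if i \<le> n then (-1) ^ i * fact n / fact (n - i) else 0)"
proof (cases "i \<le> n")
  case True
  have "pochhammer (- real n) i = (-1) ^ i * pochhammer (real n - of_nat i + 1) i"
    by (rule pochhammer_minus)
  also have "real n - of_nat i + 1 = 1 + real (n - i)"
    using True by (simp add: of_nat_diff)
  also have "pochhammer (1 + real (n - i)) i = fact n / fact (n - i)"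
    using pochhammer_product'[of "1::real" "n - i" i] True
    by (simp add: pochhammer_fact nonzero_eq_divide_eq pochhammer_eq_0_iff)
  finally show ?thesis using True by simp
next
  case False
  then show ?thesis using pochhammer_of_nat_eq_0_iff[of n i, where 'a=real] by simp
qed

text \<open>\<open>poch_ratio z R c\<close> is \<open>\<Gamma>(z + c) / \<Gamma>(z + R)\<close>, written without \<open>\<Gamma>\<close> so that it makes
  sense at the poles of \<open>\<Gamma>\<close>.\<close>

definition poch_ratio :: "'a::field \<Rightarrow> nat \<Rightarrow> nat \<Rightarrow> 'a" where
  "poch_ratio z R c = (if R \<le> c then pochhammer (z + of_nat R) (c - R)
                       else 1 / pochhammer (z + of_nat c) (R - c))"

lemma pochhammer_eq_poch_ratio:
  fixes z :: "'a::field"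
  assumes "i \<le> n" "i \<le> R" and nz: "n < R \<Longrightarrow> pochhammer (z + of_nat n) (R - n) \<noteq> 0"
  shows "pochhammer (z + of_nat i) (n - i) = pochhammer (z + of_nat i) (R - i) * poch_ratio z R n"
proof (cases "R \<le> n")
  case True
  have "pochhammer (z + of_nat i) ((R - i) + (n - R)) =
        pochhammer (z + of_nat i) (R - i) * pochhammer (z + of_nat i + of_nat (R - i)) (n - R)"
    by (rule pochhammer_product')
  moreover have "(R - i) + (n - R) = n - i" using True assms by simp
  moreover have "z + of_nat i + of_nat (R - i) = z + of_nat R" using assms by (simp add: of_nat_diff)
  ultimately show ?thesis using True by (simp add: poch_ratio_def)
next
  case False
  have "pochhammer (z + of_nat i) ((n - i) + (R - n)) =
        pochhammer (z + of_nat i) (n - i) * pochhammer (z + of_nat i + of_nat (n - i)) (R - n)"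
    by (rule pochhammer_product')
  moreover have "(n - i) + (R - n) = R - i" using False assms by simp
  moreover have "z + of_nat i + of_nat (n - i) = z + of_nat n" using assms by (simp add: of_nat_diff)
  ultimately show ?thesis using False nz by (simp add: poch_ratio_def)
qed

text \<open>Both sides are \<open>\<Gamma>(z + i + m) \<Gamma>(z + R) / (\<Gamma>(z + i) \<Gamma>(z + m))\<close>.\<close>

lemma pochhammer_exchange:
  fixes z :: "'a::comm_semiring_1"
  assumes "i \<le> R" "m \<le> R"
  shows "pochhammer (z + of_nat i) m * pochhammer (z + of_nat m) (R - m) =
         pochhammer (z + of_nat i) (R - i) * pochhammer (z + of_nat m) i"
proof (cases "m + i \<le> R")
  case True
  have "pochhammer (z + of_nat m) (i + (R - m - i)) =
     pochhammer (z + of_nat m) i * pochhammer (z + of_nat m + of_nat i) (R - m - i)"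
    "pochhammer (z + of_nat i) (m + (R - m - i)) =
     pochhammer (z + of_nat i) m * pochhammer (z + of_nat i + of_nat m) (R - m - i)"
    by (rule pochhammer_product')+
  moreover have "i + (R - m - i) = R - m" "m + (R - m - i) = R - i" using True by simp_all
  ultimately show ?thesis by (simp add: algebra_simps)
next
  case False
  have "pochhammer (z + of_nat m) ((R - m) + (m + i - R)) =
     pochhammer (z + of_nat m) (R - m) * pochhammer (z + of_nat m + of_nat (R - m)) (m + i - R)"
    "pochhammer (z + of_nat i) ((R - i) + (m + i - R)) =
     pochhammer (z + of_nat i) (R - i) * pochhammer (z + of_nat i + of_nat (R - i)) (m + i - R)"
    by (rule pochhammer_product')+
  moreover have "(R - m) + (m + i - R) = i" "(R - i) + (m + i - R) = m" using False assms by simp_all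
  moreover have "z + of_nat m + of_nat (R - m) = z + of_nat R" "z + of_nat i + of_nat (R - i) = z + of_nat R"
    using assms by (metis add.assoc le_add_diff_inverse of_nat_add)+
  ultimately show ?thesis by (simp add: algebra_simps)
qed

lemma pochhammer_eq_poch_ratio':
  fixes z :: "'a::field"
  assumes "i \<le> R" and nz: "m < R \<Longrightarrow> pochhammer (z + of_nat m) (R - m) \<noteq> 0"
  shows "pochhammer (z + of_nat i) m =
     pochhammer (z + of_nat i) (R - i) * poch_ratio z R m * pochhammer (z + of_nat m) i"
proof (cases "R \<le> m")
  case True
  have "pochhammer (z + of_nat i) ((R - i) + (m - R) + i) =
        pochhammer (z + of_nat i) ((R - i) + (m - R)) * pochhammer (z + of_nat i + of_nat ((R - i) + (m - R))) i"
    "pochhammer (z + of_nat i) ((R - i) + (m - R)) =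
        pochhammer (z + of_nat i) (R - i) * pochhammer (z + of_nat i + of_nat (R - i)) (m - R)"
    by (rule pochhammer_product')+
  moreover have "(R - i) + (m - R) + i = m" using True assms by simp
  moreover have "z + of_nat i + of_nat (R - i) = z + of_nat R"
    "z + of_nat i + of_nat ((R - i) + (m - R)) = z + of_nat m"
    using True assms by (simp_all flip: of_nat_add)
  ultimately show ?thesis using True by (simp add: poch_ratio_def)
next
  case False
  have nz': "pochhammer (z + of_nat m) (R - m) \<noteq> 0"
    using False nz by simp
  have "pochhammer (z + of_nat i) m =
      pochhammer (z + of_nat i) m * pochhammer (z + of_nat m) (R - m) / pochhammer (z + of_nat m) (R - m)"
    using nz' by simp
  also have "\<dots> = pochhammer (z + of_nat i) (R - i) * pochhammer (z + of_nat m) i / pochhammer (z + of_nat m) (R - m)"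
    using False assms by (simp only: pochhammer_exchange)
  finally show ?thesis
    using False by (simp add: poch_ratio_def)
qed

lemma split_index_characterization:
  assumes sorted: "sorted_wrt (>) ns"
  shows "1 \<le> split_index ns t" and "split_index ns t \<le> length ns + 1"
    and "\<And>i. i \<in> {1..length ns} \<Longrightarrow> i < split_index ns t \<longleftrightarrow> t \<le> int (ns ! (i - 1))"
proof -
  define k where "k = length (takeWhile (\<lambda>n. t \<le> int n) ns)"
  have k_le: "k \<le> length ns" by (simp add: k_def length_takeWhile_le)
  have prefix_iff: "t \<le> int (ns ! i) \<longleftrightarrow> i < k" if i: "i < length ns" for i
  proof
    assume "i < k"
    then show "t \<le> int (ns ! i)"
      by (metis k_def nth_mem set_takeWhileD takeWhile_nth)
  next
    assume t: "t \<le> int (ns ! i)"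
    show "i < k"
    proof (rule ccontr)
      assume "\<not> i < k"
      then have "k < length ns"
        using i by simp
      moreover have "ns ! i \<le> ns ! k"
        using \<open>\<not> i < k\<close> i sorted_wrt_nth_less[OF sorted, of k i] by (cases "k = i") auto
      moreover have "\<not> t \<le> int (ns ! k)"
        using nth_length_takeWhile[of "\<lambda>n. t \<le> int n" ns] \<open>k < length ns\<close> by (simp add: k_def)
      ultimately show False using t by linarith
    qed
  qed
  define P where "P s \<longleftrightarrow> 1 \<le> s \<and>
      (\<forall>i\<in>{1..length ns}. (s \<le> i \<longrightarrow> int (ns ! (i - 1)) < t) \<and>
                            (i < s \<longrightarrow> int (ns ! (i - 1)) \<ge> t))" for s
  have "P (Suc k)"
    unfolding P_def
  proof (intro conjI ballI)
    fix i assume i: "i \<in> {1..length ns}"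
    then have "i - 1 < length ns" by auto
    then have "t \<le> int (ns ! (i - 1)) \<longleftrightarrow> i < Suc k"
      using prefix_iff i by auto
    then show "Suc k \<le> i \<longrightarrow> int (ns ! (i - 1)) < t" and "i < Suc k \<longrightarrow> t \<le> int (ns ! (i - 1))"
      by auto
  qed simp
  then have P: "P (split_index ns t)" and "split_index ns t \<le> Suc k"
    unfolding split_index_def P_def[symmetric] by (rule LeastI, rule Least_le)
  then show "1 \<le> split_index ns t" "split_index ns t \<le> length ns + 1"
    using k_le unfolding P_def by auto
  show "i < split_index ns t \<longleftrightarrow> t \<le> int (ns ! (i - 1))" if "i \<in> {1..length ns}" for i
  proof -
    have "(split_index ns t \<le> i \<longrightarrow> int (ns ! (i - 1)) < t) \<and> (i < split_index ns t \<longrightarrow> t \<le> int (ns ! (i - 1)))"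
      using P that unfolding P_def by blast
    then show ?thesis by linarith
  qed
qed

lemma prod_poch_ratio_split:
  assumes sorted: "sorted_wrt (>) ns" and len: "length ns \<le> r"
  shows "(\<Prod>j<length ns. poch_ratio (a + 1) (r - 1) (ns ! j)) =
    (\<Prod>i=1..split_index ns (int r - 1) - 1. pochhammer (a + real r) (ns ! (i - 1) + 1 - r)) /
    (\<Prod>i=split_index ns (int r - 1)..length ns.
        pochhammer (a + 1 + real (ns ! (i - 1))) (r - 1 - ns ! (i - 1)))"
proof (cases "ns = []")
  case True
  have "split_index ns (int r - 1) = 1"
    unfolding split_index_def True by (rule Least_equality) auto
  then show ?thesis using True by simp
next
  case False
  then have r: "r \<ge> 1" using len by (cases ns) auto
  define s where "s = split_index ns (int r - 1)"
  have s: "1 \<le> s" "s \<le> length ns + 1"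
    and below_s: "\<And>i. i \<in> {1..length ns} \<Longrightarrow> i < s \<longleftrightarrow> r - 1 \<le> ns ! (i - 1)"
    using split_index_characterization[OF sorted, where t="int r - 1"] r unfolding s_def by auto
  have "(\<Prod>j<length ns. poch_ratio (a + 1) (r - 1) (ns ! j)) =
      (\<Prod>i=1..length ns. poch_ratio (a + 1) (r - 1) (ns ! (i - 1)))"
    by (simp add: prod.atLeast1_atMost_eq)
  also have "\<dots> = (\<Prod>i=1..s-1. poch_ratio (a + 1) (r - 1) (ns ! (i - 1))) *
      (\<Prod>i=s..length ns. poch_ratio (a + 1) (r - 1) (ns ! (i - 1)))"
    using s by (subst prod.union_disjoint[symmetric]) (auto intro!: prod.cong)
  also have "(\<Prod>i=1..s-1. poch_ratio (a + 1) (r - 1) (ns ! (i - 1))) =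
       (\<Prod>i=1..s-1. pochhammer (a + real r) (ns ! (i - 1) + 1 - r))"
  proof (rule prod.cong[OF refl])
    fix i assume "i \<in> {1..s-1}"
    then have "i \<in> {1..length ns}" "i < s" using s by auto
    then have "r - 1 \<le> ns ! (i - 1)" using below_s by blast
    moreover have "a + 1 + real (r - 1) = a + real r" using r by (simp add: of_nat_diff)
    ultimately show "poch_ratio (a + 1) (r - 1) (ns ! (i - 1)) = pochhammer (a + real r) (ns ! (i - 1) + 1 - r)"
      by (simp add: poch_ratio_def)
  qed
  also have "(\<Prod>i=s..length ns. poch_ratio (a + 1) (r - 1) (ns ! (i - 1))) =
       (\<Prod>i=s..length ns. 1 / pochhammer (a + 1 + real (ns ! (i - 1))) (r - 1 - ns ! (i - 1)))"
  proof (rule prod.cong[OF refl])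
    fix i assume "i \<in> {s..length ns}"
    then have "i \<in> {1..length ns}" "\<not> i < s" using s by auto
    then have "\<not> r - 1 \<le> ns ! (i - 1)" using below_s by blast
    then show "poch_ratio (a + 1) (r - 1) (ns ! (i - 1)) =
        1 / pochhammer (a + 1 + real (ns ! (i - 1))) (r - 1 - ns ! (i - 1))"
      by (simp add: poch_ratio_def)
  qed
  finally show ?thesis
    unfolding s_def by (simp add: prod_dividef)
qed

lemma pochhammer_nonzero_beyond_split:
  assumes sorted: "sorted_wrt (>) ns"
    and nz: "(\<Prod>i=split_index ns (int r - 1)..length ns.
               pochhammer (a + 1 + real (ns ! (i - 1))) (r - 1 - ns ! (i - 1))) \<noteq> 0"
    and j: "j < length ns" and "ns ! j < r - 1"
  shows "pochhammer (a + 1 + real (ns ! j)) (r - 1 - ns ! j) \<noteq> 0"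
proof -
  have "Suc j \<in> {split_index ns (int r - 1)..length ns}"
    using split_index_characterization(3)[OF sorted, where t="int r - 1" and i="Suc j"] j \<open>ns ! j < r - 1\<close>
    by auto
  moreover have "\<forall>i\<in>{split_index ns (int r - 1)..length ns}.
      pochhammer (a + 1 + real (ns ! (i - 1))) (r - 1 - ns ! (i - 1)) \<noteq> 0"
    using nz by (simp add: prod_zero_iff)
  ultimately show ?thesis by fastforce
qed

section \<open>The Wronskian at the origin\<close>

lemma higher_deriv_laguerre_at_0:
  assumes "i < r" and "n < r - 1 \<Longrightarrow> pochhammer (a + 1 + real n) (r - 1 - n) \<noteq> 0"
  shows "(deriv ^^ i) (\<lambda>y. laguerre n a y) 0 =
    pochhammer (a + 1 + real i) (r - 1 - i) * (poch_ratio (a + 1) (r - 1) n / fact n) * pochhammer (- real n) i"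
proof (cases "i \<le> n")
  case True
  have "(deriv ^^ i) (\<lambda>y. laguerre n a y) 0 = (-1) ^ i * pochhammer (a + 1 + real i) (n - i) / fact (n - i)"
    using True by (simp add: higher_deriv_laguerre laguerre_at_0 ac_simps)
  also have "pochhammer (a + 1 + real i) (n - i) = pochhammer (a + 1 + real i) (r - 1 - i) * poch_ratio (a + 1) (r - 1) n"
    by (rule pochhammer_eq_poch_ratio) (use True assms in auto)
  finally show ?thesis
    using True by (simp add: pochhammer_minus_of_nat field_simps)
next
  case False
  then show ?thesis by (simp add: higher_deriv_laguerre pochhammer_minus_of_nat)
qed

lemma higher_deriv_exp_laguerre_minus_at_0:
  assumes "i < r" and "m < r - 1 \<Longrightarrow> pochhammer (a + 1 + real m) (r - 1 - m) \<noteq> 0"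
  shows "(deriv ^^ i) (\<lambda>y. exp y * laguerre m a (- y)) 0 =
    pochhammer (a + 1 + real i) (r - 1 - i) * (poch_ratio (a + 1) (r - 1) m / fact m) * pochhammer (a + 1 + real m) i"
proof -
  have "(deriv ^^ i) (\<lambda>y. exp y * laguerre m a (- y)) 0 = pochhammer (a + 1 + real i) m / fact m"
    by (simp add: higher_deriv_exp_laguerre_minus laguerre_at_0 ac_simps)
  also have "pochhammer (a + 1 + real i) m =
      pochhammer (a + 1 + real i) (r - 1 - i) * poch_ratio (a + 1) (r - 1) m * pochhammer (a + 1 + real m) i"
    by (rule pochhammer_eq_poch_ratio') (use assms in auto)
  finally show ?thesis by simp
qed

lemma prod_lessThan_add: "(\<Prod>j<p + q. f j) = (\<Prod>j<p. f j) * (\<Prod>j<q. f (p + j) :: 'a::comm_monoid_mult)"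
  for p q :: nat
  by (induction q) (simp_all add: mult.assoc)

lemma laguerre_P_at_0_factored:
  assumes r: "r = length ns + length ms"
    and nz_ns: "\<And>j. j < length ns \<Longrightarrow> ns ! j < r - 1 \<Longrightarrow>
                  pochhammer (a + 1 + real (ns ! j)) (r - 1 - ns ! j) \<noteq> 0"
    and nz_ms: "\<And>j. j < length ms \<Longrightarrow> ms ! j < r - 1 \<Longrightarrow>
                  pochhammer (a + 1 + real (ms ! j)) (r - 1 - ms ! j) \<noteq> 0"
  shows "laguerre_P a ns ms 0 =
    (\<Prod>i<r. pochhammer (a + 1 + real i) (r - 1 - i)) *
    (\<Prod>j<length ns. poch_ratio (a + 1) (r - 1) (ns ! j) / fact (ns ! j)) *
    (\<Prod>j<length ms. poch_ratio (a + 1) (r - 1) (ms ! j) / fact (ms ! j)) *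
    vandermonde (map (\<lambda>n. - real n) ns @ map (\<lambda>m. a + 1 + real m) ms)"
proof -
  define p where "p = length ns"
  define fs where "fs = map (\<lambda>n y. laguerre n a y) ns @ map (\<lambda>m y. exp y * laguerre m a (- y)) ms"
  define xs where "xs = map (\<lambda>n. - real n) ns @ map (\<lambda>m. a + 1 + real m) ms"
  define col where "col j = (if j < p then poch_ratio (a + 1) (r - 1) (ns ! j) / fact (ns ! j)
       else poch_ratio (a + 1) (r - 1) (ms ! (j - p)) / fact (ms ! (j - p)))" for j
  have len_fs: "length fs = r" by (simp add: fs_def r)
  have entry: "(deriv ^^ i) (fs ! j) 0 = pochhammer (a + 1 + real i) (r - 1 - i) * col j * pochhammer (xs ! j) i"
    if i: "i < r" and j: "j < r" for i j
  proof (cases "j < p")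
    case True
    then show ?thesis
      using higher_deriv_laguerre_at_0[OF i nz_ns[of j]]
      by (simp add: fs_def xs_def col_def nth_append p_def)
  next
    case False
    then have "j - p < length ms" using j r p_def by auto
    then show ?thesis
      using False higher_deriv_exp_laguerre_minus_at_0[OF i nz_ms[of "j - p"]]
      by (simp add: fs_def xs_def col_def nth_append p_def)
  qed
  have "laguerre_P a ns ms 0 =
      det (mat r r (\<lambda>(i,j). pochhammer (a + 1 + real i) (r - 1 - i) * col j * pochhammer (xs ! j) i))"
    unfolding laguerre_P_def wronskian_def fs_def[symmetric]
    using len_fs by (auto simp: entry intro!: arg_cong[where f=det] eq_matI)
  also have "\<dots> = (\<Prod>i<r. pochhammer (a + 1 + real i) (r - 1 - i)) * (\<Prod>j<r. col j) * vandermonde xs"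
    by (simp add: det_mat_scale_rows_cols vandermonde_eq_det_pochhammer xs_def r)
  also have "(\<Prod>j<r. col j) = (\<Prod>j<length ns. poch_ratio (a + 1) (r - 1) (ns ! j) / fact (ns ! j)) *
      (\<Prod>j<length ms. poch_ratio (a + 1) (r - 1) (ms ! j) / fact (ms ! j))"
    by (simp add: r prod_lessThan_add col_def p_def)
  finally show ?thesis by (simp add: xs_def mult.assoc)
qed

lemma laguerre_P_at_0_closed_form:
  assumes sorted_ns: "sorted_wrt (>) ns" and sorted_ms: "sorted_wrt (>) ms"
    and r: "r = length ns + length ms"
    and den: "(\<Prod>i=split_index ns (int r - 1)..length ns. pochhammer (a + 1 + real (ns ! (i - 1))) (r - 1 - ns ! (i - 1)))
             * (\<Prod>j=split_index ms (int r - 1)..length ms. pochhammer (a + 1 + real (ms ! (j - 1))) (r - 1 - ms ! (j - 1)))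
             * (\<Prod>i=1..length ns. fact (ns ! (i - 1)))
             * (\<Prod>j=1..length ms. fact (ms ! (j - 1))) \<noteq> 0" (is "?D\<^sub>n * ?D\<^sub>m * ?F\<^sub>n * ?F\<^sub>m \<noteq> 0")
  shows "laguerre_P a ns ms 0 = ((\<Prod>k=1..r. pochhammer (a + real k) (r - k))
             * (\<Prod>i=1..split_index ns (int r - 1) - 1. pochhammer (a + real r) (ns ! (i - 1) + 1 - r))
             * (\<Prod>j=1..split_index ms (int r - 1) - 1. pochhammer (a + real r) (ms ! (j - 1) + 1 - r))
             * vandermonde (map (\<lambda>n. - real n) (rev ns) @ map (\<lambda>m. a + 1 + real m) ms))
             / (?D\<^sub>n * ?D\<^sub>m * ?F\<^sub>n * ?F\<^sub>m)
       \<or> laguerre_P a ns ms 0 = - (((\<Prod>k=1..r. pochhammer (a + real k) (r - k))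
             * (\<Prod>i=1..split_index ns (int r - 1) - 1. pochhammer (a + real r) (ns ! (i - 1) + 1 - r))
             * (\<Prod>j=1..split_index ms (int r - 1) - 1. pochhammer (a + real r) (ms ! (j - 1) + 1 - r))
             * vandermonde (map (\<lambda>n. - real n) (rev ns) @ map (\<lambda>m. a + 1 + real m) ms))
             / (?D\<^sub>n * ?D\<^sub>m * ?F\<^sub>n * ?F\<^sub>m))"
proof -
  have "?D\<^sub>n \<noteq> 0" "?D\<^sub>m \<noteq> 0" "?F\<^sub>n \<noteq> 0" "?F\<^sub>m \<noteq> 0" using den by auto
  have "length ns \<le> r" "length ms \<le> r" using r by auto
  have "laguerre_P a ns ms 0 =
    (\<Prod>i<r. pochhammer (a + 1 + real i) (r - 1 - i)) *
    (\<Prod>j<length ns. poch_ratio (a + 1) (r - 1) (ns ! j) / fact (ns ! j)) *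
    (\<Prod>j<length ms. poch_ratio (a + 1) (r - 1) (ms ! j) / fact (ms ! j)) *
    vandermonde (map (\<lambda>n. - real n) ns @ map (\<lambda>m. a + 1 + real m) ms)"
    using pochhammer_nonzero_beyond_split[OF sorted_ns \<open>?D\<^sub>n \<noteq> 0\<close>]
      pochhammer_nonzero_beyond_split[OF sorted_ms \<open>?D\<^sub>m \<noteq> 0\<close>]
    by (intro laguerre_P_at_0_factored r)
  also have "(\<Prod>i<r. pochhammer (a + 1 + real i) (r - 1 - i)) = (\<Prod>k=1..r. pochhammer (a + real k) (r - k))"
    by (simp add: prod.atLeast1_atMost_eq ac_simps)
  also have "(\<Prod>j<length ns. poch_ratio (a + 1) (r - 1) (ns ! j) / fact (ns ! j)) =
      (\<Prod>i=1..split_index ns (int r - 1) - 1. pochhammer (a + real r) (ns ! (i - 1) + 1 - r)) / ?D\<^sub>n / ?F\<^sub>n"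
    using prod_poch_ratio_split[OF sorted_ns \<open>length ns \<le> r\<close>]
    by (simp add: prod_dividef prod.atLeast1_atMost_eq)
  also have "(\<Prod>j<length ms. poch_ratio (a + 1) (r - 1) (ms ! j) / fact (ms ! j)) =
      (\<Prod>j=1..split_index ms (int r - 1) - 1. pochhammer (a + real r) (ms ! (j - 1) + 1 - r)) / ?D\<^sub>m / ?F\<^sub>m"
    using prod_poch_ratio_split[OF sorted_ms \<open>length ms \<le> r\<close>]
    by (simp add: prod_dividef prod.atLeast1_atMost_eq)
  finally show ?thesis
    using vandermonde_rev_append[of "map (\<lambda>n. - real n) ns" "map (\<lambda>m. a + 1 + real m) ms"]
      \<open>?D\<^sub>n \<noteq> 0\<close> \<open>?D\<^sub>m \<noteq> 0\<close> \<open>?F\<^sub>n \<noteq> 0\<close> \<open>?F\<^sub>m \<noteq> 0\<close>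
    by (elim disjE) (simp_all add: rev_map field_simps)
qed

section \<open>Multiplying a Wronskian by a power\<close>

lemma leibniz_sum_Suc:
  fixes G F :: "nat \<Rightarrow> 'a::comm_ring_1"
  shows "(\<Sum>k\<le>i. of_nat (i choose k) * (G (Suc (i - k)) * F k + G (i - k) * F (Suc k))) =
         (\<Sum>k\<le>Suc i. of_nat (Suc i choose k) * G (Suc i - k) * F k)"
proof -
  have "(\<Sum>k\<le>i. of_nat (i choose k) * (G (Suc (i - k)) * F k)) =
        (\<Sum>k\<le>Suc i. of_nat (i choose k) * (G (Suc (i - k)) * F k))"
    by (simp add: binomial_eq_0)
  also have "\<dots> = G (Suc i) * F 0 + (\<Sum>k\<le>i. of_nat (i choose Suc k) * (G (Suc (i - Suc k)) * F (Suc k)))"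
    by (subst sum.atMost_Suc_shift) simp
  also have "(\<Sum>k\<le>i. of_nat (i choose Suc k) * (G (Suc (i - Suc k)) * F (Suc k))) =
             (\<Sum>k\<le>i. of_nat (i choose Suc k) * G (i - k) * F (Suc k))"
    by (intro sum.cong refl) (auto simp: Suc_diff_Suc le_eq_less_or_eq binomial_eq_0)
  finally have "(\<Sum>k\<le>i. of_nat (i choose k) * (G (Suc (i - k)) * F k)) =
      G (Suc i) * F 0 + (\<Sum>k\<le>i. of_nat (i choose Suc k) * G (i - k) * F (Suc k))" .
  moreover have "(\<Sum>k\<le>Suc i. of_nat (Suc i choose k) * G (Suc i - k) * F k) =
     G (Suc i) * F 0 + (\<Sum>k\<le>i. of_nat (i choose k) * G (i - k) * F (Suc k))
       + (\<Sum>k\<le>i. of_nat (i choose Suc k) * G (i - k) * F (Suc k))"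
    by (subst sum.atMost_Suc_shift) (simp add: sum.distrib algebra_simps)
  ultimately show ?thesis
    by (simp add: distrib_left sum.distrib algebra_simps)
qed

lemma higher_deriv_mult_real:
  fixes G F :: "nat \<Rightarrow> real \<Rightarrow> real"
  assumes "open S"
    and G: "\<And>k y. y \<in> S \<Longrightarrow> (G k has_real_derivative G (Suc k) y) (at y)"
    and F: "\<And>k y. y \<in> S \<Longrightarrow> (F k has_real_derivative F (Suc k) y) (at y)"
    and "y \<in> S"
  shows "(deriv ^^ i) (\<lambda>y. G 0 y * F 0 y) y = (\<Sum>k\<le>i. of_nat (i choose k) * G (i - k) y * F k y)"
  using \<open>y \<in> S\<close>
proof (induction i arbitrary: y)
  case 0
  then show ?case by simp
next
  case (Suc i)
  have "((\<lambda>y. \<Sum>k\<le>i. of_nat (i choose k) * G (i - k) y * F k y) has_real_derivative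
        (\<Sum>k\<le>i. of_nat (i choose k) * (G (Suc (i - k)) y * F k y + G (i - k) y * F (Suc k) y))) (at y)"
    unfolding mult.assoc
    by (intro DERIV_sum DERIV_cmult, rule DERIV_cong[OF DERIV_mult[OF G[OF Suc.prems] F[OF Suc.prems]]])
      (simp add: algebra_simps)
  then have "((deriv ^^ i) (\<lambda>y. G 0 y * F 0 y) has_real_derivative
        (\<Sum>k\<le>i. of_nat (i choose k) * (G (Suc (i - k)) y * F k y + G (i - k) y * F (Suc k) y))) (at y)"
    by (rule has_field_derivative_transform_within_open[OF _ \<open>open S\<close> Suc.prems]) (simp add: Suc.IH)
  then show ?case
    using leibniz_sum_Suc[of i "\<lambda>k. G k y" "\<lambda>k. F k y"] by (simp add: DERIV_imp_deriv)
qed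

definition smooth :: "(real \<Rightarrow> real) \<Rightarrow> bool" where
  "smooth f \<longleftrightarrow> (\<forall>k y. (deriv ^^ k) f differentiable (at y))"

lemma smooth_has_real_derivative:
  "smooth f \<Longrightarrow> ((deriv ^^ k) f has_real_derivative (deriv ^^ Suc k) f y) (at y)"
  by (simp add: smooth_def DERIV_deriv_iff_real_differentiable)

definition powr_higher_deriv :: "real \<Rightarrow> nat \<Rightarrow> real \<Rightarrow> real" where
  "powr_higher_deriv c k y = (-1) ^ k * pochhammer (- c) k * y powr (c - real k)"

lemma has_real_derivative_powr_higher_deriv:
  assumes "y > 0"
  shows "(powr_higher_deriv c k has_real_derivative powr_higher_deriv c (Suc k) y) (at y)"
proof -
  have "((\<lambda>y. (-1) ^ k * pochhammer (- c) k * y powr (c - real k)) has_real_derivative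
        (-1) ^ k * pochhammer (- c) k * ((c - real k) * y powr (c - real k - 1))) (at y)"
    by (rule DERIV_cmult[OF has_real_derivative_powr[OF assms]])
  moreover have "(-1) ^ k * pochhammer (- c) k * ((c - real k) * y powr (c - real k - 1)) =
      powr_higher_deriv c (Suc k) y"
    by (simp add: powr_higher_deriv_def pochhammer_rec' algebra_simps diff_diff_eq)
  ultimately show ?thesis unfolding powr_higher_deriv_def[abs_def] by simp
qed

lemma higher_deriv_powr_mult:
  assumes "smooth f" and "x > 0"
  shows "(deriv ^^ i) (\<lambda>y. y powr c * f y) x =
    (\<Sum>k\<le>i. of_nat (i choose k) * powr_higher_deriv c (i - k) x * (deriv ^^ k) f x)"
proof -
  have product: "(\<lambda>y. y powr c * f y) = (\<lambda>y. powr_higher_deriv c 0 y * (deriv ^^ 0) f y)"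
    by (simp add: powr_higher_deriv_def fun_eq_iff)
  show ?thesis unfolding product
  proof (rule higher_deriv_mult_real[where S="{0<..}"])
    show "((deriv ^^ k) f has_real_derivative (deriv ^^ Suc k) f y) (at y)" for k y
      by (rule smooth_has_real_derivative[OF assms(1)])
  qed (use assms(2) has_real_derivative_powr_higher_deriv in auto)
qed

lemma wronskian_powr_mult:
  assumes smooth: "\<forall>f\<in>set fs. smooth f" and "x > 0"
  shows "wronskian (map (\<lambda>f y. y powr c * f y) fs) x = (x powr c) ^ length fs * wronskian fs x"
proof -
  define n where "n = length fs"
  define T :: "real mat" where
    "T = mat n n (\<lambda>(i,k). if k \<le> i then of_nat (i choose k) * powr_higher_deriv c (i - k) x else 0)"
  define W where "W = mat n n (\<lambda>(i,j). (deriv ^^ i) (fs ! j) x)"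
  have "mat n n (\<lambda>(i,j). (deriv ^^ i) (map (\<lambda>f y. y powr c * f y) fs ! j) x) = T * W"
  proof (rule eq_matI)
    fix i j assume "i < dim_row (T * W)" "j < dim_col (T * W)"
    then have i: "i < n" and j: "j < n" by (auto simp: T_def W_def)
    have "(T * W) $$ (i, j) = (\<Sum>k<n. (if k \<le> i
        then of_nat (i choose k) * powr_higher_deriv c (i - k) x else 0) * (deriv ^^ k) (fs ! j) x)"
      using i j by (simp add: T_def W_def scalar_prod_def atLeast0LessThan)
    also have "\<dots> = (\<Sum>k\<le>i. of_nat (i choose k) * powr_higher_deriv c (i - k) x * (deriv ^^ k) (fs ! j) x)"
      using i by (intro sum.mono_neutral_cong_right) auto
    also have "\<dots> = (deriv ^^ i) (\<lambda>y. y powr c * (fs ! j) y) x"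
      using higher_deriv_powr_mult[OF _ \<open>x > 0\<close>] smooth j by (simp add: n_def)
    finally show "mat n n (\<lambda>(i,j). (deriv ^^ i) (map (\<lambda>f y. y powr c * f y) fs ! j) x) $$ (i, j) = (T * W) $$ (i, j)"
      using i j by (simp add: n_def)
  qed (auto simp: T_def W_def)
  then have "wronskian (map (\<lambda>f y. y powr c * f y) fs) x = det T * det W"
    by (simp add: wronskian_def n_def det_mult[where n=n] T_def W_def)
  also have "det T = (x powr c) ^ n"
  proof -
    have "det T = prod_list (diag_mat T)"
      by (rule det_lower_triangular[where n=n]) (auto simp: T_def)
    also have "diag_mat T = map (\<lambda>i. x powr c) [0..<n]"
      unfolding diag_mat_def
      by (intro map_cong) (auto simp: T_def powr_higher_deriv_def simp del: upt_Suc)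
    finally show ?thesis by (simp add: map_replicate_const del: upt_Suc)
  qed
  finally show ?thesis by (simp add: wronskian_def W_def n_def)
qed

lemma isCont_wronskian:
  assumes "\<forall>f\<in>set fs. smooth f"
  shows "isCont (wronskian fs) x0"
proof -
  define n where "n = length fs"
  have "wronskian fs = (\<lambda>x. \<Sum>p\<in>{p. p permutes {0..<n}}.
      signof p * (\<Prod>i\<in>{0..<n}. (deriv ^^ i) (fs ! (p i)) x))"
  proof
    fix x
    have "p i < n" if "p permutes {0..<n}" "i \<in> {0..<n}" for p i
      using permutes_in_image[OF that(1)] that(2) by auto
    then show "wronskian fs x = (\<Sum>p\<in>{p. p permutes {0..<n}}.
        signof p * (\<Prod>i\<in>{0..<n}. (deriv ^^ i) (fs ! (p i)) x))"
      unfolding wronskian_def n_def[symmetric] det_def'[OF mat_carrier]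
      by (auto intro!: sum.cong arg_cong[where f="\<lambda>t. signof _ * t"] prod.cong)
  qed
  moreover have "isCont ((deriv ^^ i) (fs ! j)) x0" if "j < n" for i j
    using assms that smooth_has_real_derivative DERIV_isCont by (metis n_def nth_mem)
  then have "isCont ((deriv ^^ i) (fs ! (p i))) x0" if "p permutes {0..<n}" "i \<in> {0..<n}" for p i
    using permutes_in_image[OF that(1)] that(2) by auto
  ultimately show ?thesis
    by (auto intro!: continuous_intros)
qed

lemma laguerre_differentiable: "laguerre m \<beta> differentiable (at y)"
proof (cases m)
  case 0
  then have "laguerre m \<beta> = (\<lambda>_. 1)" by (simp add: fun_eq_iff)
  then show ?thesis by simp
next
  case (Suc m0)
  then show ?thesis using has_real_derivative_laguerre[of m0 \<beta> y] by (auto simp: real_differentiable_def)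
qed

lemma smooth_laguerre: "smooth (\<lambda>y. laguerre n \<beta> y)"
  unfolding smooth_def higher_deriv_laguerre
proof (intro allI)
  fix k y
  show "(\<lambda>y. if k \<le> n then (-1) ^ k * laguerre (n - k) (\<beta> + of_nat k) y else 0) differentiable (at y)"
    by (cases "k \<le> n") (auto intro!: differentiable_mult laguerre_differentiable)
qed

lemma smooth_exp_laguerre_minus: "smooth (\<lambda>y. exp y * laguerre m \<beta> (- y))"
  unfolding smooth_def higher_deriv_exp_laguerre_minus
  using has_real_derivative_exp_laguerre_minus by (auto simp: real_differentiable_def)

lemma laguerre_Q_eq_laguerre_P:
  assumes "x > 0"
  shows "laguerre_Q a ns ms x = laguerre_P (- a) ms ns x"
proof -
  define fs where "fs = map (\<lambda>n y. laguerre n (- a) y) ms @ map (\<lambda>m y. exp y * laguerre m (- a) (- y)) ns"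
  have smooth: "\<forall>f\<in>set fs. smooth f"
    by (auto simp: fs_def smooth_laguerre smooth_exp_laguerre_minus)
  have map_powr: "map (\<lambda>m y. y powr (- a) * laguerre m (- a) y) ms @
      map (\<lambda>n y. exp y * y powr (- a) * laguerre n (- a) (- y)) ns = map (\<lambda>f y. y powr (- a) * f y) fs"
    by (simp add: fs_def fun_eq_iff mult.commute mult.left_commute)
  have len_fs: "length fs = length ns + length ms"
    by (simp add: fs_def)
  have powr_cancel: "x powr (a * real (length ns + length ms)) * (x powr (- a)) ^ (length ns + length ms) = 1"
    using assms by (simp add: powr_power powr_add[symmetric])
  have "laguerre_Q a ns ms x = exp (- real (length ns) * x) *
      (x powr (a * real (length ns + length ms)) * (x powr (- a)) ^ (length ns + length ms)) * wronskian fs x"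
    unfolding laguerre_Q_def map_powr wronskian_powr_mult[OF smooth assms] len_fs by (simp add: mult.assoc)
  also have "\<dots> = laguerre_P (- a) ms ns x"
    unfolding powr_cancel by (simp add: laguerre_P_def fs_def)
  finally show ?thesis .
qed

lemma laguerre_Q_tendsto: "(laguerre_Q a ns ms \<longlongrightarrow> laguerre_P (- a) ms ns 0) (at_right 0)"
proof -
  have "isCont (laguerre_P (- a) ms ns) 0"
    unfolding laguerre_P_def[abs_def]
    by (intro continuous_intros isCont_wronskian) (auto simp: smooth_laguerre smooth_exp_laguerre_minus)
  then have "(laguerre_P (- a) ms ns \<longlongrightarrow> laguerre_P (- a) ms ns 0) (at_right 0)"
    by (simp add: isCont_def filterlim_at_split)
  moreover have "eventually (\<lambda>x. laguerre_P (- a) ms ns x = laguerre_Q a ns ms x) (at_right 0)"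
    using eventually_at_right_less[of 0] by eventually_elim (simp add: laguerre_Q_eq_laguerre_P)
  ultimately show ?thesis by (rule Lim_transform_eventually)
qed

theorem corollary6p3:
  fixes \<alpha> :: real and ns ms ns' ms' :: "nat list"
  assumes "sorted_wrt (>) ns" and "sorted_wrt (>) ms"
    and "sorted_wrt (>) ns'" and "sorted_wrt (>) ms'"
  shows
  "((let p = length ns; q = length ms; r = p + q;
         s = split_index ns (int r - 1); s' = split_index ms (int r - 1);
         num = (\<Prod>k=1..r. pochhammer (\<alpha> + real k) (r - k))
             * (\<Prod>i=1..s-1. pochhammer (\<alpha> + real r) (ns ! (i - 1) + 1 - r))
             * (\<Prod>j=1..s'-1. pochhammer (\<alpha> + real r) (ms ! (j - 1) + 1 - r))
             * vandermonde (map (\<lambda>n. - real n) (rev ns) @ map (\<lambda>m. \<alpha> + 1 + real m) ms);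
         den = (\<Prod>i=s..p. pochhammer (\<alpha> + 1 + real (ns ! (i - 1))) (r - 1 - ns ! (i - 1)))
             * (\<Prod>j=s'..q. pochhammer (\<alpha> + 1 + real (ms ! (j - 1))) (r - 1 - ms ! (j - 1)))
             * (\<Prod>i=1..p. fact (ns ! (i - 1)))
             * (\<Prod>j=1..q. fact (ms ! (j - 1)))
     in den \<noteq> 0 \<longrightarrow> (laguerre_P \<alpha> ns ms 0 = num / den \<or> laguerre_P \<alpha> ns ms 0 = - (num / den))))
   \<and>
   (    (let p = length ns'; q = length ms'; r = p + q;
         s = split_index ns' (int r - 1); s' = split_index ms' (int r - 1);
         num = (\<Prod>k=1..r. pochhammer (- \<alpha> + real k) (r - k))
             * (\<Prod>j=1..s'-1. pochhammer (- \<alpha> + real r) (ms' ! (j - 1) + 1 - r))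
             * (\<Prod>i=1..s-1. pochhammer (- \<alpha> + real r) (ns' ! (i - 1) + 1 - r))
             * vandermonde (map (\<lambda>m. - real m) (rev ms') @ map (\<lambda>n. - \<alpha> + 1 + real n) ns');
         den = (\<Prod>j=s'..q. pochhammer (- \<alpha> + 1 + real (ms' ! (j - 1))) (r - 1 - ms' ! (j - 1)))
             * (\<Prod>i=s..p. pochhammer (- \<alpha> + 1 + real (ns' ! (i - 1))) (r - 1 - ns' ! (i - 1)))
             * (\<Prod>j=1..q. fact (ms' ! (j - 1)))
             * (\<Prod>i=1..p. fact (ns' ! (i - 1)))
     in den \<noteq> 0 \<longrightarrow> ((laguerre_Q \<alpha> ns' ms' \<longlongrightarrow> num / den) (at_right 0) \<or>
                        (laguerre_Q \<alpha> ns' ms' \<longlongrightarrow> - (num / den)) (at_right 0))))"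
  unfolding Let_def
  apply (intro conjI impI)
  subgoal premises den
    using laguerre_P_at_0_closed_form[OF assms(1,2) refl den] .
  subgoal premises den
    using laguerre_P_at_0_closed_form[OF assms(4,3) add.commute den] laguerre_Q_tendsto[of \<alpha> ns' ms']
    by auto
  done

end
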